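(* Let $R$ be an associative ring with identity and $a,b,c,d\in R$ such that both $a^{\|(b,c)}$ and $d^{\|(b,c)}$ exist. Then the following are equivalent: (i) $a^{\|(b,c)}a=d^{\|(b,c)}d$; (ii) $d^{\|(b,c)}da^{\|(b,c)}a=a^{\|(b,c)}ad^{\|(b,c)}d$; (iii) $a^{\|(b,c)}dd^{\|(b,c)}a=d^{\|(b,c)}aa^{\|(b,c)}d$; (iv) $a^{\|(b,c)}d$ is group invertible and $(a^{\|(b,c)}d)^{\#}=d^{\|(b,c)}a$; (v) $d^{\|(b,c)}a$ is group invertible and $(d^{\|(b,c)}a)^{\#}=a^{\|(b,c)}d$.
   Context: For $a,b,c\in R$, $a$ is $(b,c)$-invertible if there exists $y\in R$ with $y\in (bRy)\cap(yRc)$, $yab=b$ and $cay=c$; such $y$ is unique and denoted $a^{\|(b,c)}$. An element $x\in R$ is group invertible if there is $z\in R$ with $xzx=x$, $zxz=z$, $xz=zx$; such $z$ is unique and denoted $x^{\#}$. *)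

theory Defs
  imports Main
begin

definition is_bc_inverse :: "'a::ring_1 \<Rightarrow> 'a \<Rightarrow> 'a \<Rightarrow> 'a \<Rightarrow> bool" where
  "is_bc_inverse a b c y \<longleftrightarrow>
     (\<exists>r. y = b * r * y) \<and> (\<exists>s. y = y * s * c) \<and> y * a * b = b \<and> c * a * y = c"

definition bc_invertible :: "'a::ring_1 \<Rightarrow> 'a \<Rightarrow> 'a \<Rightarrow> bool" where
  "bc_invertible a b c \<longleftrightarrow> (\<exists>y. is_bc_inverse a b c y)"

definition bc_inv :: "'a::ring_1 \<Rightarrow> 'a \<Rightarrow> 'a \<Rightarrow> 'a" where
  "bc_inv a b c = (THE y. is_bc_inverse a b c y)"

definition is_group_inverse :: "'a::ring_1 \<Rightarrow> 'a \<Rightarrow> bool" where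
  "is_group_inverse x z \<longleftrightarrow> x * z * x = x \<and> z * x * z = z \<and> x * z = z * x"

definition group_invertible :: "'a::ring_1 \<Rightarrow> bool" where
  "group_invertible x \<longleftrightarrow> (\<exists>z. is_group_inverse x z)"

definition group_inv :: "'a::ring_1 \<Rightarrow> 'a" where
  "group_inv x = (THE z. is_group_inverse x z)"

end

theory Submission
  imports Defs
begin

text \<open>Two (b,c)-inverses y of a and z of d with the same b and c absorb each other:
  z d y = y because y \<in> bRy and z d b = b, and y d z = y because y \<in> yRc and c d z = c.
  Hence (y a)(z d) = z d, (z d)(y a) = y a, (y d)(z a) = y a and (z a)(y d) = z d, so y d and
  z a are always mutually inner inverses with products y a and z d. All five conditions then
  say the same thing: y a = z d.\<close>

lemma mult_left_fix_of_right_ideal: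
  fixes x y b :: "'a::ring_1"
  assumes "\<exists>r. y = b * r * y" and "x * b = b"
  shows "x * y = y"
proof -
  obtain r where r: "y = b * r * y" using assms(1) by blast
  have "x * y = (x * b) * r * y" by (subst r) (simp only: mult.assoc)
  with assms(2) r show ?thesis by simp
qed

lemma mult_right_fix_of_left_ideal:
  fixes x y c :: "'a::ring_1"
  assumes "\<exists>s. y = y * s * c" and "c * x = c"
  shows "y * x = y"
proof -
  obtain s where s: "y = y * s * c" using assms(1) by blast
  have "y * x = y * s * (c * x)" by (subst s) (simp only: mult.assoc)
  with assms(2) s show ?thesis by simp
qed

lemma is_bc_inverse_absorb:
  fixes a d b c y z :: "'a::ring_1"
  assumes y: "is_bc_inverse a b c y" and z: "is_bc_inverse d b c z"
  shows "z * d * y = y" and "y * d * z = y"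
proof -
  show "z * d * y = y"
    using y z unfolding is_bc_inverse_def by (blast intro: mult_left_fix_of_right_ideal)
  have "y * (d * z) = y"
    using y z unfolding is_bc_inverse_def by (metis mult_right_fix_of_left_ideal mult.assoc)
  then show "y * d * z = y" by (simp add: mult.assoc)
qed

lemma is_bc_inverse_unique:
  fixes a b c y y' :: "'a::ring_1"
  assumes "is_bc_inverse a b c y" and "is_bc_inverse a b c y'"
  shows "y = y'"
  using is_bc_inverse_absorb[OF assms] is_bc_inverse_absorb[OF assms(2,1)] by simp

lemma bc_inv_is_bc_inverse:
  fixes a b c :: "'a::ring_1"
  assumes "bc_invertible a b c"
  shows "is_bc_inverse a b c (bc_inv a b c)"
proof -
  obtain y where "is_bc_inverse a b c y" using assms unfolding bc_invertible_def by blast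
  with is_bc_inverse_unique have "\<exists>!y. is_bc_inverse a b c y" by blast
  then show ?thesis unfolding bc_inv_def by (rule theI')
qed

lemma is_group_inverse_unique:
  fixes x z z' :: "'a::ring_1"
  assumes "is_group_inverse x z" and "is_group_inverse x z'"
  shows "z = z'"
proof -
  have z: "x * z * x = x" "z * x * z = z" "x * z = z * x"
    and z': "x * z' * x = x" "z' * x * z' = z'" "x * z' = z' * x"
    using assms unfolding is_group_inverse_def by auto
  have "x * z = (x * z') * x * z" by (simp add: z'(1))
  also have "\<dots> = z' * (x * (z * x))" by (simp add: z'(3) z(3) mult.assoc)
  also have "\<dots> = x * z'" by (metis z(1) z'(3) mult.assoc)
  finally have same_idempotent: "x * z = x * z'" .
  have "z = z * (x * z)" using z(2) by (simp add: mult.assoc)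
  also have "\<dots> = (z * x) * z'" by (simp add: same_idempotent mult.assoc)
  also have "\<dots> = z' * x * z'" by (simp add: same_idempotent z(3)[symmetric] z'(3))
  finally show ?thesis using z'(2) by simp
qed

lemma group_inv_eq_iff:
  fixes x w :: "'a::ring_1"
  shows "group_invertible x \<and> group_inv x = w \<longleftrightarrow> is_group_inverse x w"
proof
  assume "group_invertible x \<and> group_inv x = w"
  then obtain z where "is_group_inverse x z" and "group_inv x = w"
    unfolding group_invertible_def by blast
  with is_group_inverse_unique have "\<exists>!z. is_group_inverse x z" by blast
  then have "is_group_inverse x (group_inv x)" unfolding group_inv_def by (rule theI')
  with \<open>group_inv x = w\<close> show "is_group_inverse x w" by simp
next
  assume "is_group_inverse x w"
  with is_group_inverse_unique have "group_inv x = w"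
    unfolding group_inv_def by (blast intro: the_equality)
  with \<open>is_group_inverse x w\<close> show "group_invertible x \<and> group_inv x = w"
    unfolding group_invertible_def by blast
qed

lemma is_group_inverse_iff_commute:
  fixes x w :: "'a::ring_1"
  assumes "x * w * x = x" and "w * x * w = w"
  shows "is_group_inverse x w \<longleftrightarrow> x * w = w * x"
  using assms unfolding is_group_inverse_def by simp

theorem theorem4p3:
  fixes a b c d :: "'a::ring_1"
  assumes "bc_invertible a b c" and "bc_invertible d b c"
  defines "ai \<equiv> bc_inv a b c" and "di \<equiv> bc_inv d b c"
  shows "(ai * a = di * d \<longleftrightarrow> di * d * ai * a = ai * a * di * d)
       \<and> (ai * a = di * d \<longleftrightarrow> ai * d * di * a = di * a * ai * d)
       \<and> (ai * a = di * d \<longleftrightarrow> group_invertible (ai * d) \<and> group_inv (ai * d) = di * a)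
       \<and> (ai * a = di * d \<longleftrightarrow> group_invertible (di * a) \<and> group_inv (di * a) = ai * d)"
proof -
  have ai: "is_bc_inverse a b c ai" and di: "is_bc_inverse d b c di"
    using assms by (simp_all add: bc_inv_is_bc_inverse)
  note ai_ai = is_bc_inverse_absorb[OF ai ai] and di_di = is_bc_inverse_absorb[OF di di]
  note ai_di = is_bc_inverse_absorb[OF ai di] and di_ai = is_bc_inverse_absorb[OF di ai]
  have products: "di * d * ai * a = ai * a" "ai * a * di * d = di * d"
    "ai * d * di * a = ai * a" "di * a * ai * d = di * d"
    using ai_di di_ai by simp_all
  have "ai * d * (di * a) * (ai * d) = ai * d" and "di * a * (ai * d) * (di * a) = di * a"
    by (simp_all add: mult.assoc[symmetric] ai_ai di_di ai_di di_ai)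
  then have "is_group_inverse (ai * d) (di * a) \<longleftrightarrow> ai * a = di * d"
    and "is_group_inverse (di * a) (ai * d) \<longleftrightarrow> ai * a = di * d"
    using products by (auto simp: is_group_inverse_iff_commute mult.assoc[symmetric])
  then show ?thesis
    unfolding group_inv_eq_iff products by simp
qed

end
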